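(* For any integers $a,a'>1$, if $\mathrm{L}_a\cap\mathrm{L}_{a'}\neq\emptyset$ then $a\in\mathrm{L}_{a'}$ or $a'\in\mathrm{L}_a$. Consequently, either $\mathrm{L}_a\cap\mathrm{L}_{a'}=\emptyset$, or $\mathrm{L}_a\subset\mathrm{L}_{a'}$, or $\mathrm{L}_a\supset\mathrm{L}_{a'}$.
   Context: For an integer $a>1$ let $P(a)$ be its largest prime factor and $\mathrm{L}_a=\{ba: b\in\mathbb{N},\ \text{every prime } p\mid b \text{ satisfies } p\ge P(a)\}$. *)

theory Defs
  imports "HOL-Computational_Algebra.Primes"
begin

definition gpf :: "nat \<Rightarrow> nat" where
  "gpf a = Max (prime_factors a)"

definition Lset :: "nat \<Rightarrow> nat set" where
  "Lset a = {b * a | b. b \<ge> 1 \<and> (\<forall>p. prime p \<and> p dvd b \<longrightarrow> p \<ge> gpf a)}"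

end

theory Submission
  imports Defs
begin

text \<open>
  Write \<open>P(a)\<close> for the largest prime factor of \<open>a\<close>. A number \<open>x > 0\<close> lies in \<open>L\<^sub>a\<close> exactly when
  \<open>a\<close> divides \<open>x\<close> and \<open>x\<close> has the same multiplicity as \<open>a\<close> at every prime below \<open>P(a)\<close>.
  Given a common element \<open>x\<close> of \<open>L\<^sub>a\<close> and \<open>L\<^sub>a\<^sub>'\<close>, order \<open>a, a'\<close> lexicographically by
  \<open>P\<close> and then by the multiplicity of \<open>P\<close>; if \<open>a\<close> is the smaller one, comparing multiplicities
  of \<open>a\<close>, \<open>a'\<close> with those of \<open>x\<close> prime by prime shows that \<open>a'\<close> satisfies this
  characterisation of \<open>L\<^sub>a\<close>. Finally \<open>a' \<in> L\<^sub>a\<close> forces \<open>P(a) \<le> P(a')\<close>, and then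
  \<open>L\<^sub>a\<^sub>' \<subseteq> L\<^sub>a\<close> by the same characterisation.
\<close>

lemma gpf_in_prime_factors:
  assumes "a > (1::nat)"
  shows "gpf a \<in> prime_factors a"
proof -
  obtain p where "prime p" "p dvd a"
    using prime_factor_nat[of a] assms by auto
  then have "prime_factors a \<noteq> {}"
    using assms by (auto simp: prime_factors_dvd)
  then show ?thesis
    unfolding gpf_def by (intro Max_in) auto
qed

lemma prime_gpf: "a > (1::nat) \<Longrightarrow> prime (gpf a)"
  using gpf_in_prime_factors by auto

lemma gpf_dvd: "a > (1::nat) \<Longrightarrow> gpf a dvd a"
  using gpf_in_prime_factors by auto

lemma prime_factor_le_gpf:
  assumes "a > (1::nat)" "prime q" "q dvd a"
  shows "q \<le> gpf a"
  using assms unfolding gpf_def by (auto simp: prime_factors_dvd)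

lemma mem_Lset_ge: "x \<in> Lset a \<Longrightarrow> a \<le> x"
  unfolding Lset_def by auto

lemma mem_Lset_iff:
  assumes a: "a > 1" and x: "x > 0"
  shows "x \<in> Lset a \<longleftrightarrow>
    a dvd x \<and> (\<forall>q. prime q \<and> q < gpf a \<longrightarrow> multiplicity q x = multiplicity q a)"
proof
  assume "x \<in> Lset a"
  then obtain b where xb: "x = b * a" and b: "b \<ge> 1"
    and rough: "\<forall>p. prime p \<and> p dvd b \<longrightarrow> p \<ge> gpf a"
    unfolding Lset_def by blast
  have "multiplicity q x = multiplicity q a" if q: "prime q" "q < gpf a" for q
  proof -
    have "multiplicity q b = 0"
      using rough q by (intro not_dvd_imp_multiplicity_0) auto
    then show ?thesis
      using xb q a b by (simp add: prime_elem_multiplicity_mult_distrib)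
  qed
  then show "a dvd x \<and> (\<forall>q. prime q \<and> q < gpf a \<longrightarrow> multiplicity q x = multiplicity q a)"
    using xb by simp
next
  assume "a dvd x \<and> (\<forall>q. prime q \<and> q < gpf a \<longrightarrow> multiplicity q x = multiplicity q a)"
  then have "a dvd x"
    and same: "\<forall>q. prime q \<and> q < gpf a \<longrightarrow> multiplicity q x = multiplicity q a"
    by auto
  then obtain c where xc: "x = c * a"
    by (metis dvd_def mult.commute)
  have c: "c \<ge> 1"
    using xc x by (cases c) auto
  have "p \<ge> gpf a" if p: "prime p" "p dvd c" for p
  proof (rule ccontr)
    assume "\<not> p \<ge> gpf a"
    then have "multiplicity p c + multiplicity p a = multiplicity p a"
      using same p xc c a by (simp add: prime_elem_multiplicity_mult_distrib)
    moreover have "multiplicity p c \<noteq> 0"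
      using p c by (simp add: prime_elem_multiplicity_eq_zero_iff)
    ultimately show False by simp
  qed
  then show "x \<in> Lset a"
    unfolding Lset_def using xc c by blast
qed

lemma gpf_le_if_mem_Lset:
  assumes a: "a > 1" and a': "a' \<in> Lset a"
  shows "gpf a \<le> gpf a'"
proof -
  have "a \<le> a'" "a dvd a'"
    using mem_Lset_ge[OF a'] mem_Lset_iff[OF a] a a' by auto
  then show ?thesis
    using a prime_gpf gpf_dvd prime_factor_le_gpf by (meson dvd_trans less_le_trans)
qed

lemma Lset_subset_if_mem:
  assumes a: "a > 1" and a': "a' \<in> Lset a"
  shows "Lset a' \<subseteq> Lset a"
proof
  fix x assume x: "x \<in> Lset a'"
  have a'1: "a' > 1" and x0: "x > 0"
    using mem_Lset_ge[OF a'] mem_Lset_ge[OF x] a by simp_all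
  have "a dvd a'" and "\<forall>q. prime q \<and> q < gpf a \<longrightarrow> multiplicity q a' = multiplicity q a"
    using a' mem_Lset_iff[OF a] a'1 by auto
  moreover have "a' dvd x" and "\<forall>q. prime q \<and> q < gpf a' \<longrightarrow> multiplicity q x = multiplicity q a'"
    using x mem_Lset_iff[OF a'1 x0] by auto
  moreover have "gpf a \<le> gpf a'"
    using gpf_le_if_mem_Lset[OF a a'] .
  ultimately show "x \<in> Lset a"
    using mem_Lset_iff[OF a x0] by (metis dvd_trans order_less_le_trans)
qed

lemma mem_Lset_if_common_element:
  assumes a: "a > 1" and a': "a' > 1" and x: "x \<in> Lset a" "x \<in> Lset a'"
    and smaller: "gpf a < gpf a' \<or>
      (gpf a = gpf a' \<and> multiplicity (gpf a) a \<le> multiplicity (gpf a') a')"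
  shows "a' \<in> Lset a"
proof -
  have x0: "x > 0"
    using mem_Lset_ge[OF x(1)] a by simp
  have a_dvd_x: "a dvd x" and below_a: "\<And>q. prime q \<Longrightarrow> q < gpf a \<Longrightarrow> multiplicity q x = multiplicity q a"
    using x(1) mem_Lset_iff[OF a x0] by auto
  have below_a': "\<And>q. prime q \<Longrightarrow> q < gpf a' \<Longrightarrow> multiplicity q x = multiplicity q a'"
    using x(2) mem_Lset_iff[OF a' x0] by auto
  have "a dvd a'"
  proof (rule multiplicity_le_imp_dvd)
    fix q :: nat assume q: "prime q"
    consider "q < gpf a" | "q = gpf a" "gpf a < gpf a'" | "q = gpf a" "gpf a = gpf a'" | "q > gpf a"
      using smaller by linarith
    then show "multiplicity q a \<le> multiplicity q a'"
    proof cases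
      case 1
      then show ?thesis
        using below_a below_a' q smaller by force
    next
      case 2
      then show ?thesis
        using below_a' q a_dvd_x x0 by (metis dvd_imp_multiplicity_le order_less_irrefl)
    next
      case 3
      then show ?thesis
        using smaller by simp
    next
      case 4
      then have "\<not> q dvd a"
        using prime_factor_le_gpf[OF a q] by fastforce
      then show ?thesis
        by (simp add: not_dvd_imp_multiplicity_0)
    qed
  qed (use a in simp)
  moreover have "multiplicity q a' = multiplicity q a" if "prime q" "q < gpf a" for q
    using below_a below_a' that smaller by force
  ultimately show ?thesis
    using mem_Lset_iff a a' by simp
qed

theorem lemma2p1:
  fixes a a' :: nat
  assumes "a > 1" and "a' > 1"
  shows "(Lset a \<inter> Lset a' \<noteq> {} \<longrightarrow> a \<in> Lset a' \<or> a' \<in> Lset a)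
       \<and> (Lset a \<inter> Lset a' = {} \<or> Lset a \<subseteq> Lset a' \<or> Lset a' \<subseteq> Lset a)"
proof -
  have comparable: "a \<in> Lset a' \<or> a' \<in> Lset a" if common: "Lset a \<inter> Lset a' \<noteq> {}"
  proof -
    obtain x where "x \<in> Lset a" "x \<in> Lset a'"
      using common by blast
    moreover have "gpf a < gpf a' \<or>
        (gpf a = gpf a' \<and> multiplicity (gpf a) a \<le> multiplicity (gpf a') a') \<or>
      gpf a' < gpf a \<or>
        (gpf a' = gpf a \<and> multiplicity (gpf a') a' \<le> multiplicity (gpf a) a)"
      by auto
    ultimately show ?thesis
      using mem_Lset_if_common_element assms by blast
  qed
  then show ?thesis
    using Lset_subset_if_mem assms by blast
qed

end
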